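(* Let $G=(V,E)$ be a finite simple graph which is $S_{1,1,5}$-free, $K_4$-free, diamond-free and butterfly-free. Let $xy\in E$ and let $r$ be a vertex with $rx\in E$ and $ry\notin E$. For $i\ge 1$ let $N_i=\{z\in V:\operatorname{dist}_G(z,\{x,y\})=i\}$. Assume $N_2$ is an independent set and every vertex of $N_3$ has exactly one neighbor in $N_2$. If $|N_2|\ge 5$, then $N_6=\emptyset$.
   Context: $S_{1,1,5}$ is the tree with a center $u$ adjacent to $a$, $b$ and $z_1$, where $u,z_1,\dots,z_5$ is an induced path, and no other edges. A diamond is $K_4$ minus one edge; a butterfly consists of two disjoint edges (inducing $2K_2$) together with a vertex adjacent to all four of their endpoints. $\operatorname{dist}_G(z,\{x,y\})$ is the minimum of the distances from $z$ to $x$ and to $y$. *)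

theory Defs
  imports Main
begin

definition simple_graph :: "'a set \<Rightarrow> ('a \<Rightarrow> 'a \<Rightarrow> bool) \<Rightarrow> bool" where
  "simple_graph V E \<longleftrightarrow> finite V \<and> (\<forall>u v. E u v \<longrightarrow> E v u) \<and> (\<forall>u. \<not> E u u)
     \<and> (\<forall>u v. E u v \<longrightarrow> u \<in> V \<and> v \<in> V)"

definition has_induced :: "'a set \<Rightarrow> ('a \<Rightarrow> 'a \<Rightarrow> bool) \<Rightarrow> nat \<Rightarrow> (nat \<Rightarrow> nat \<Rightarrow> bool) \<Rightarrow> bool" where
  "has_induced V E n H \<longleftrightarrow> (\<exists>f. inj_on f {..<n} \<and> f ` {..<n} \<subseteq> V \<and>
     (\<forall>i<n. \<forall>j<n. i \<noteq> j \<longrightarrow> (E (f i) (f j) \<longleftrightarrow> H i j)))"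

definition edges_of :: "(nat \<times> nat) list \<Rightarrow> nat \<Rightarrow> nat \<Rightarrow> bool" where
  "edges_of es i j \<longleftrightarrow> (i, j) \<in> set es \<or> (j, i) \<in> set es"

text \<open>S_{1,1,5}: u=0, a=1, b=2, z1..z5 = 3..7.\<close>
definition S115 :: "nat \<Rightarrow> nat \<Rightarrow> bool" where
  "S115 = edges_of [(0,1),(0,2),(0,3),(3,4),(4,5),(5,6),(6,7)]"

definition K4 :: "nat \<Rightarrow> nat \<Rightarrow> bool" where
  "K4 = edges_of [(0,1),(0,2),(0,3),(1,2),(1,3),(2,3)]"

definition diamond :: "nat \<Rightarrow> nat \<Rightarrow> bool" where
  "diamond = edges_of [(0,1),(0,2),(0,3),(1,2),(1,3)]"

definition butterfly :: "nat \<Rightarrow> nat \<Rightarrow> bool" where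
  "butterfly = edges_of [(0,1),(2,3),(4,0),(4,1),(4,2),(4,3)]"

definition walk :: "'a set \<Rightarrow> ('a \<Rightarrow> 'a \<Rightarrow> bool) \<Rightarrow> 'a list \<Rightarrow> bool" where
  "walk V E xs \<longleftrightarrow> xs \<noteq> [] \<and> set xs \<subseteq> V \<and> (\<forall>i. Suc i < length xs \<longrightarrow> E (xs ! i) (xs ! Suc i))"

definition walk_to :: "'a set \<Rightarrow> ('a \<Rightarrow> 'a \<Rightarrow> bool) \<Rightarrow> 'a \<Rightarrow> 'a set \<Rightarrow> nat \<Rightarrow> bool" where
  "walk_to V E z S k \<longleftrightarrow> (\<exists>xs. walk V E xs \<and> hd xs = z \<and> last xs \<in> S \<and> length xs = Suc k)"

definition dist_is :: "'a set \<Rightarrow> ('a \<Rightarrow> 'a \<Rightarrow> bool) \<Rightarrow> 'a \<Rightarrow> 'a set \<Rightarrow> nat \<Rightarrow> bool" where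
  "dist_is V E z S i \<longleftrightarrow> walk_to V E z S i \<and> (\<forall>j<i. \<not> walk_to V E z S j)"

definition layer :: "'a set \<Rightarrow> ('a \<Rightarrow> 'a \<Rightarrow> bool) \<Rightarrow> 'a set \<Rightarrow> nat \<Rightarrow> 'a set" where
  "layer V E S i = {z \<in> V. dist_is V E z S i}"

end

(*
  Suppose N_6 (L 6 below) contains a vertex, follow a shortest path z5, ..., z1 from it down
  to N_2, and pick u in N_1 adjacent to z1; by the symmetry of x and y, u ~ x. Since vertices
  in layers two apart are never adjacent, a claw centred in N_0 or N_1 whose third branch
  continues down through z1, ..., z5 is usually an induced S_{1,1,5}; every case distinction
  below ends in such a configuration or in two triangles sharing a vertex, which
  {K4, diamond, butterfly}-freeness forbids. In this way every w in N_2 other than z1 has a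
  neighbour in N_1 that is not adjacent to z1, and such an N_1 vertex has no other neighbour
  in N_2, so |N_2| - 1 is at most the number of N_1 vertices not adjacent to z1. Splitting
  these by their neighbours among x and y bounds their number by 3, hence |N_2| <= 4.
*)

theory Submission
  imports Defs
begin

lemma has_induced_of_list:
  assumes "simple_graph V E" "distinct xs" "set xs \<subseteq> V" "length xs = n"
    and "\<And>i j. H i j = H j i"
    and "\<forall>j<n. \<forall>i<j. E (xs ! i) (xs ! j) \<longleftrightarrow> H i j"
  shows "has_induced V E n H"
  unfolding has_induced_def
proof (intro exI[of _ "(!) xs"] conjI allI impI)
  show "inj_on ((!) xs) {..<n}"
    using assms(2,4) by (simp add: inj_on_def nth_eq_iff_index_eq)
  show "(!) xs ` {..<n} \<subseteq> V"
    using assms(3,4) by auto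
  have E_sym: "E u v = E v u" for u v
    using assms(1) unfolding simple_graph_def by blast
  fix i j assume "i < n" "j < n" "i \<noteq> j"
  then consider "i < j" | "j < i" by linarith
  then show "E (xs ! i) (xs ! j) \<longleftrightarrow> H i j"
    by cases (use assms(5,6) E_sym \<open>i < n\<close> \<open>j < n\<close> in metis)+
qed

lemma walk_Cons_Cons:
  "walk V E (z # w # ys) \<longleftrightarrow> z \<in> V \<and> E z w \<and> walk V E (w # ys)"
  unfolding walk_def by (auto simp: less_Suc_eq_0_disj)

lemma walk_to_0: "walk_to V E z S 0 \<longleftrightarrow> z \<in> V \<and> z \<in> S"
proof
  show "walk_to V E z S 0" if "z \<in> V \<and> z \<in> S"
    using that unfolding walk_to_def walk_def by (intro exI[of _ "[z]"]) auto
qed (auto simp: walk_to_def walk_def length_Suc_conv)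

lemma walk_to_Suc:
  assumes "simple_graph V E"
  shows "walk_to V E z S (Suc k) \<longleftrightarrow> (\<exists>w. E z w \<and> walk_to V E w S k)"
proof
  assume "walk_to V E z S (Suc k)"
  then obtain w ys where "walk V E (z # w # ys)" "last (w # ys) \<in> S" "length ys = k"
    unfolding walk_to_def by (auto simp: length_Suc_conv)
  then show "\<exists>w. E z w \<and> walk_to V E w S k"
    unfolding walk_Cons_Cons walk_to_def by fastforce
next
  assume "\<exists>w. E z w \<and> walk_to V E w S k"
  then obtain w ys where "E z w" "walk V E (w # ys)" "last (w # ys) \<in> S" "length ys = k"
    unfolding walk_to_def by (auto simp: length_Suc_conv)
  moreover have "z \<in> V"
    using \<open>E z w\<close> assms unfolding simple_graph_def by blast
  ultimately show "walk_to V E z S (Suc k)"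
    unfolding walk_to_def by (intro exI[of _ "z # w # ys"]) (simp add: walk_Cons_Cons)
qed

definition dist_to :: "'a set \<Rightarrow> ('a \<Rightarrow> 'a \<Rightarrow> bool) \<Rightarrow> 'a \<Rightarrow> 'a set \<Rightarrow> nat" where
  "dist_to V E z S = (LEAST k. walk_to V E z S k)"

lemma dist_is_iff: "dist_is V E z S i \<longleftrightarrow> walk_to V E z S i \<and> dist_to V E z S = i"
  unfolding dist_is_def dist_to_def
  by (metis (mono_tags, lifting) LeastI Least_le le_antisym not_less not_less_Least)

lemma dist_to_layer: "z \<in> layer V E S i \<Longrightarrow> dist_to V E z S = i"
  by (simp add: layer_def dist_is_iff)

lemma dist_to_adjacent:
  assumes "simple_graph V E" "E a b"
  shows "dist_to V E a S \<le> Suc (dist_to V E b S)"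
proof (cases "\<exists>k. walk_to V E b S k")
  case True
  then have "walk_to V E b S (dist_to V E b S)"
    unfolding dist_to_def by (rule LeastI_ex)
  with assms have "walk_to V E a S (Suc (dist_to V E b S))"
    by (auto simp: walk_to_Suc)
  then show ?thesis
    unfolding dist_to_def by (rule Least_le)
next
  case False
  have "E b a"
    using assms unfolding simple_graph_def by blast
  with False have "\<not> walk_to V E a S k" for k
    using walk_to_Suc[OF assms(1), of b S k] by blast
  \<comment> \<open>neither endpoint reaches S, so both distances are the same junk value\<close>
  with False have "walk_to V E a S = walk_to V E b S"
    by (intro ext) blast
  then show ?thesis
    by (simp add: dist_to_def)
qed

lemma layer_Suc_neighbour:
  assumes "simple_graph V E" "z \<in> layer V E S (Suc i)"
  shows "\<exists>w \<in> layer V E S i. E z w"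
proof -
  from assms obtain w where w: "E z w" "walk_to V E w S i"
    by (auto simp: layer_def dist_is_iff walk_to_Suc)
  have "dist_to V E w S \<le> i"
    using w(2) unfolding dist_to_def by (rule Least_le)
  moreover have "Suc i \<le> Suc (dist_to V E w S)"
    using dist_to_adjacent[OF assms(1) w(1), of S] dist_to_layer[OF assms(2)] by simp
  moreover have "w \<in> V"
    using assms(1) w(1) unfolding simple_graph_def by blast
  ultimately show ?thesis
    using w by (auto simp: layer_def dist_is_iff)
qed

lemma layer_0: "layer V E S 0 = V \<inter> S"
  by (auto simp: layer_def dist_is_def walk_to_0)

lemma layer_1:
  assumes "simple_graph V E"
  shows "z \<in> layer V E S 1 \<longleftrightarrow> z \<in> V - S \<and> (\<exists>s\<in>S. E z s)"
  using assms unfolding simple_graph_def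
  by (auto simp: layer_def dist_is_def walk_to_Suc[OF assms] walk_to_0)

locale S115_K4_diamond_butterfly_free =
  fixes V :: "'a set" and E :: "'a \<Rightarrow> 'a \<Rightarrow> bool"
  assumes simple: "simple_graph V E"
    and no_S115: "\<not> has_induced V E 8 S115"
    and no_K4: "\<not> has_induced V E 4 K4"
    and no_diamond: "\<not> has_induced V E 4 diamond"
    and no_butterfly: "\<not> has_induced V E 5 butterfly"
begin

lemma E_sym: "E u v = E v u"
  and E_irrefl: "\<not> E u u"
  and E_in_V: "E u v \<Longrightarrow> u \<in> V" "E u v \<Longrightarrow> v \<in> V"
  using simple unfolding simple_graph_def by blast+

lemma E_symD: "E u v \<Longrightarrow> E v u"
  using E_sym by blast

lemma induced_of_list:
  assumes "distinct xs" "set xs \<subseteq> V" "length xs = n" "H = edges_of es"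
    and "\<forall>j<n. \<forall>i<j. E (xs ! i) (xs ! j) \<longleftrightarrow> H i j"
  shows "has_induced V E n H"
proof (rule has_induced_of_list[OF simple assms(1-3)])
  show "H i j = H j i" for i j
    using assms(4) by (auto simp: edges_of_def)
qed (fact assms(5))

lemma no_K4_configuration:
  assumes "E a b" "E a c" "E a d" "E b c" "E b d" "E c d"
  shows False
proof -
  have "has_induced V E 4 K4"
    by (rule induced_of_list[of "[a, b, c, d]"])
      (use assms E_irrefl E_in_V in \<open>auto simp: K4_def edges_of_def All_less_Suc2 numeral_eq_Suc\<close>)
  then show False using no_K4 by blast
qed

lemma edge_in_one_triangle:
  assumes "E a b" "E a c" "E b c" "E a d" "E b d"
  shows "c = d"
proof (rule ccontr)
  assume "c \<noteq> d"
  have "\<not> E c d"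
    using no_K4_configuration assms by blast
  then have "has_induced V E 4 diamond"
    by (intro induced_of_list[of "[a, b, c, d]"])
      (use assms \<open>c \<noteq> d\<close> E_irrefl E_in_V in \<open>auto simp: diamond_def edges_of_def All_less_Suc2 numeral_eq_Suc E_sym\<close>)
  then show False using no_diamond by blast
qed

lemma vertex_in_one_triangle:
  assumes "E v a" "E v b" "E a b" "E v c" "E v d" "E c d"
  shows "{a, b} = {c, d}"
proof (rule ccontr)
  assume ne: "{a, b} \<noteq> {c, d}"
  have reversed: "E b a" "E d c"
    using assms(3,6) E_symD by blast+
  note one_triangle = edge_in_one_triangle[of v a b c] edge_in_one_triangle[of v a b d]
    edge_in_one_triangle[of v b a c] edge_in_one_triangle[of v b a d]
  have "a \<noteq> c"
    using edge_in_one_triangle[of v a b d] assms ne by metis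
  moreover have "a \<noteq> d"
    using edge_in_one_triangle[of v a b c] assms reversed ne by (metis insert_commute)
  moreover have "b \<noteq> c"
    using edge_in_one_triangle[of v b a d] assms reversed ne by (metis insert_commute)
  moreover have "b \<noteq> d"
    using edge_in_one_triangle[of v b a c] assms reversed ne by (metis insert_commute)
  moreover have "\<not> E a c" "\<not> E a d" "\<not> E b c" "\<not> E b d"
    using one_triangle assms reversed calculation by auto
  ultimately have "has_induced V E 5 butterfly"
    using assms reversed E_irrefl E_in_V
    by (intro induced_of_list[of "[a, b, c, d, v]"])
      (auto simp: butterfly_def edges_of_def All_less_Suc2 numeral_eq_Suc E_sym)
  then show False using no_butterfly by blast
qed

lemma card_clique_in_neighbourhood:
  assumes "finite A" "\<forall>a\<in>A. E v a" "\<forall>a\<in>A. \<forall>b\<in>A. a \<noteq> b \<longrightarrow> E a b"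
  shows "card A \<le> 2"
proof (rule ccontr)
  assume "\<not> card A \<le> 2"
  then obtain B where "B \<subseteq> A" "card B = 3"
    using obtain_subset_with_card_n[of 3 A] by auto
  then obtain a b c where "{a, b, c} \<subseteq> A" "a \<noteq> b" "b \<noteq> c" "a \<noteq> c"
    by (auto simp: card_3_iff)
  then show False
    using no_K4_configuration[of v a b c] assms by auto
qed

lemma no_S115_configuration:
  assumes "E c a" "E c b" "E c p1" "E p1 p2" "E p2 p3" "E p3 p4" "E p4 p5"
    and "a \<noteq> b" "\<not> E a b"
    and "\<forall>q \<in> {p1, p2, p3, p4, p5}. \<not> E a q \<and> \<not> E b q"
    and "\<forall>q \<in> {p2, p3, p4, p5}. \<not> E c q"
    and "\<not> E p1 p3" "\<not> E p1 p4" "\<not> E p1 p5" "\<not> E p2 p4" "\<not> E p2 p5" "\<not> E p3 p5"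
  shows False
proof -
  have "distinct [c, a, b, p1, p2, p3, p4, p5]"
    using assms E_irrefl E_sym by auto
  then have "has_induced V E 8 S115"
    by (intro induced_of_list[of "[c, a, b, p1, p2, p3, p4, p5]"])
      (use assms E_in_V in \<open>auto simp: S115_def edges_of_def All_less_Suc2 numeral_eq_Suc E_sym\<close>)
  then show False using no_S115 by blast
qed

end

locale edge_layering = S115_K4_diamond_butterfly_free +
  fixes x y :: 'a
  assumes E_xy: "E x y"
    and L2_independent: "\<forall>u\<in>layer V E {x, y} 2. \<forall>v\<in>layer V E {x, y} 2. \<not> E u v"
    and L3_one_L2_neighbour: "\<forall>v\<in>layer V E {x, y} 3. card {w \<in> layer V E {x, y} 2. E v w} = 1"
begin

abbreviation L :: "nat \<Rightarrow> 'a set" where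
  "L \<equiv> layer V E {x, y}"

abbreviation level :: "'a \<Rightarrow> nat" where
  "level z \<equiv> dist_to V E z {x, y}"

lemma level_L: "z \<in> L i \<Longrightarrow> level z = i"
  by (rule dist_to_layer)

lemma nonadjacent_if_far:
  assumes "Suc (level a) < level b \<or> Suc (level b) < level a"
  shows "\<not> E a b"
proof
  assume "E a b"
  then have "level a \<le> Suc (level b)" "level b \<le> Suc (level a)"
    using dist_to_adjacent[OF simple] E_symD by blast+
  with assms show False by linarith
qed

lemma L_disjoint: "a \<in> L i \<Longrightarrow> b \<in> L j \<Longrightarrow> i \<noteq> j \<Longrightarrow> a \<noteq> b"
  using level_L by blast

lemma L_0: "L 0 = {x, y}"
  using layer_0[of V E "{x, y}"] E_in_V[OF E_xy] by auto

lemma x_L0: "x \<in> L 0" and y_L0: "y \<in> L 0"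
  using L_0 by auto

lemma L_1: "z \<in> L 1 \<longleftrightarrow> z \<in> V \<and> z \<noteq> x \<and> z \<noteq> y \<and> (E z x \<or> E z y)"
  using layer_1[OF simple] by auto

lemma finite_L: "finite (L i)"
  using simple unfolding simple_graph_def layer_def by auto

lemma L_Suc_neighbour: "z \<in> L (Suc i) \<Longrightarrow> \<exists>w\<in>L i. E z w"
  by (rule layer_Suc_neighbour[OF simple])

lemma L3_L2_neighbour_unique:
  assumes "v \<in> L 3" "w \<in> L 2" "w' \<in> L 2" "E v w" "E v w'"
  shows "w = w'"
proof -
  have "card {w \<in> L 2. E v w} = 1"
    using L3_one_L2_neighbour assms(1) by blast
  then obtain w0 where "{w \<in> L 2. E v w} = {w0}"
    by (rule card_1_singletonE)
  then show ?thesis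
    using assms(2-5) by (metis (mono_tags, lifting) mem_Collect_eq singletonD)
qed

context
  fixes z1 z2 z3 z4 z5 u :: 'a
  assumes path_L: "z1 \<in> L 2" "z2 \<in> L 3" "z3 \<in> L 4" "z4 \<in> L 5" "z5 \<in> L 6"
    and path: "E z1 z2" "E z2 z3" "E z3 z4" "E z4 z5"
    and u: "u \<in> L 1" "E u z1" "E u x"
begin

lemma level_path:
  "level x = 0" "level y = 0" "level u = 1"
  "level z1 = 2" "level z2 = 3" "level z3 = 4" "level z4 = 5" "level z5 = 6"
  using level_L L_0 u path_L by auto

lemma not_E_z2: "w \<in> L 2 \<Longrightarrow> w \<noteq> z1 \<Longrightarrow> \<not> E w z2"
  using L3_L2_neighbour_unique[of z2 w z1] path_L path E_sym by blast

lemma L2_neighbour_eq_z1: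
  assumes "c \<in> L 1" "E c z1" "w \<in> L 2" "E c w"
  shows "w = z1"
proof (rule ccontr)
  assume "w \<noteq> z1"
  obtain s where "s \<in> L 0" "E c s"
    using assms(1) L_1 L_0 by auto
  show False
    by (rule no_S115_configuration[of c w s z1 z2 z3 z4 z5])
      (use assms \<open>w \<noteq> z1\<close> \<open>s \<in> L 0\<close> \<open>E c s\<close> path path_L L2_independent not_E_z2[of w]
        in \<open>simp_all add: nonadjacent_if_far level_path level_L E_sym L_disjoint\<close>)
qed

lemma L2_neighbour_unique:
  assumes v: "v \<in> L 1" "\<not> E v z1" and w: "w \<in> L 2" "w' \<in> L 2" "E v w" "E v w'"
  shows "w = w'"
proof (rule ccontr)
  assume "w \<noteq> w'"
  have "w \<noteq> z1" "w' \<noteq> z1"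
    using v w by auto
  then have nonadj: "\<not> E u w" "\<not> E u w'" "\<not> E w z2" "\<not> E w' z2"
    using L2_neighbour_eq_z1[OF u(1,2)] not_E_z2 w by blast+
  note facts = v w \<open>w \<noteq> w'\<close> \<open>w \<noteq> z1\<close> \<open>w' \<noteq> z1\<close> nonadj path path_L u L2_independent E_xy
  consider "E v u" | "\<not> E v u" "E v x" | "\<not> E v u" "\<not> E v x" "E v y" "E u y"
    | "\<not> E v u" "\<not> E v x" "E v y" "\<not> E u y"
    using v L_1 by blast
  then show False
  proof cases
    case 1
    show False
      by (rule no_S115_configuration[of v w w' u z1 z2 z3 z4])
        (use facts 1 in \<open>simp_all add: nonadjacent_if_far level_path level_L E_sym\<close>)
  next
    case 2
    show False
      by (rule no_S115_configuration[of v w w' x u z1 z2 z3])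
        (use facts 2 in \<open>simp_all add: nonadjacent_if_far level_path level_L E_sym\<close>)
  next
    case 3
    show False
      by (rule no_S115_configuration[of v w w' y u z1 z2 z3])
        (use facts 3 in \<open>simp_all add: nonadjacent_if_far level_path level_L E_sym\<close>)
  next
    case 4
    show False
      by (rule no_S115_configuration[of v w w' y x u z1 z2])
        (use facts 4 in \<open>simp_all add: nonadjacent_if_far level_path level_L E_sym\<close>)
  qed
qed

lemma one_sided_L1_neighbour_unique:
  assumes st: "s \<in> L 0" "t \<in> L 0" "E s t" "E s u" "E t u"
    and v: "v \<in> L 1" "E v s" "\<not> E v t" "\<not> E v z1"
    and v': "v' \<in> L 1" "E v' s" "\<not> E v' t" "\<not> E v' z1"
  shows "v = v'"
proof (rule ccontr)
  assume "v \<noteq> v'"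
  have "t \<noteq> v" "t \<noteq> v'" "t \<noteq> u"
    using L_disjoint st v v' u by auto
  then have nonadjacent: "\<not> E v u" "\<not> E v' u" "\<not> E v v'"
    using vertex_in_one_triangle[of s t u v u] vertex_in_one_triangle[of s t u v' u]
      vertex_in_one_triangle[of s t u v v'] st v v' E_sym
    by (auto simp: doubleton_eq_iff)
  show False
    by (rule no_S115_configuration[of s v v' u z1 z2 z3 z4])
      (use nonadjacent st v v' \<open>v \<noteq> v'\<close> path path_L u in \<open>simp_all add: nonadjacent_if_far level_path level_L E_sym\<close>)
qed

lemma x_neighbour_adjacent_u_or_y:
  assumes "\<not> E u y" "v \<in> L 1" "\<not> E v z1" "E v x"
  shows "E v u \<or> E v y"
proof (rule ccontr)
  assume "\<not> (E v u \<or> E v y)"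
  show False
    by (rule no_S115_configuration[of x y v u z1 z2 z3 z4])
      (use assms \<open>\<not> (E v u \<or> E v y)\<close> E_xy L_disjoint[OF y_L0 assms(2)] path path_L u
        in \<open>simp_all add: nonadjacent_if_far level_path level_L E_sym\<close>)
qed

lemma y_only_neighbour_not_adjacent_u:
  assumes "v \<in> L 1" "E v y" "\<not> E v x" "\<not> E v z1"
  shows "\<not> E v u"
proof
  assume "E v u"
  show False
    by (rule no_S115_configuration[of u x v z1 z2 z3 z4 z5])
      (use assms \<open>E v u\<close> L_disjoint[OF x_L0 assms(1)] path path_L u
        in \<open>simp_all add: nonadjacent_if_far level_path level_L E_sym\<close>)
qed

lemma y_only_neighbours_adjacent:
  assumes "\<not> E u y"
    and "v \<in> L 1" "E v y" "\<not> E v x" "\<not> E v z1"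
    and "v' \<in> L 1" "E v' y" "\<not> E v' x" "\<not> E v' z1"
    and "v \<noteq> v'"
  shows "E v v'"
proof (rule ccontr)
  assume "\<not> E v v'"
  have "\<not> E v u" "\<not> E v' u"
    using y_only_neighbour_not_adjacent_u assms by blast+
  show False
    by (rule no_S115_configuration[of y v v' x u z1 z2 z3])
      (use \<open>\<not> E v v'\<close> \<open>\<not> E v u\<close> \<open>\<not> E v' u\<close> assms E_xy path path_L u
        in \<open>simp_all add: nonadjacent_if_far level_path level_L E_sym\<close>)
qed

lemma card_x_neighbours_in_L1: "card {v \<in> L 1. \<not> E v z1 \<and> E v x} \<le> 1"
proof -
  have "v = v'" if "v \<in> L 1" "\<not> E v z1" "E v x" "v' \<in> L 1" "\<not> E v' z1" "E v' x" for v v'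
  proof (cases "E u y")
    case True
    \<comment> \<open>u is then the only common neighbour of x and y outside {x, y}\<close>
    have "\<not> E v y" "\<not> E v' y"
      using edge_in_one_triangle[of x y u v] edge_in_one_triangle[of x y u v'] True that u E_xy E_sym
      by auto
    then show ?thesis
      by (intro one_sided_L1_neighbour_unique[of x y]) (use that True u E_xy L_0 E_sym in auto)
  next
    case False
    \<comment> \<open>each of v, v' spans a triangle with x and one of u, y; x lies in only one triangle\<close>
    have "v \<notin> {u, y}" "v' \<notin> {u, y}"
      using that u L_disjoint[OF y_L0] by auto
    then show ?thesis
      using x_neighbour_adjacent_u_or_y[OF False that(1-3)] x_neighbour_adjacent_u_or_y[OF False that(4-6)]
        vertex_in_one_triangle[of x _ v _ v'] that u E_xy E_sym
      by (fastforce simp: doubleton_eq_iff)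
  qed
  then show ?thesis
    using finite_L[of 1] card_le_Suc0_iff_eq[of "{v \<in> L 1. \<not> E v z1 \<and> E v x}"] by auto
qed

lemma card_y_only_neighbours_in_L1: "card {v \<in> L 1. \<not> E v z1 \<and> E v y \<and> \<not> E v x} \<le> 2"
proof (cases "E u y")
  case True
  have "v = v'"
    if "v \<in> L 1" "\<not> E v z1" "E v y" "\<not> E v x" "v' \<in> L 1" "\<not> E v' z1" "E v' y" "\<not> E v' x" for v v'
    by (rule one_sided_L1_neighbour_unique[of y x]) (use that True u E_xy L_0 E_sym in auto)
  then have "card {v \<in> L 1. \<not> E v z1 \<and> E v y \<and> \<not> E v x} \<le> 1"
    using finite_L[of 1] card_le_Suc0_iff_eq[of "{v \<in> L 1. \<not> E v z1 \<and> E v y \<and> \<not> E v x}"] by auto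
  then show ?thesis by simp
next
  case False
  show ?thesis
    by (rule card_clique_in_neighbourhood[of _ y])
      (use finite_L[of 1] y_only_neighbours_adjacent[OF False] E_sym in auto)
qed

lemma card_L1_nonadjacent_z1: "card {v \<in> L 1. \<not> E v z1} \<le> 3"
proof -
  have "{v \<in> L 1. \<not> E v z1} =
      {v \<in> L 1. \<not> E v z1 \<and> E v x} \<union> {v \<in> L 1. \<not> E v z1 \<and> E v y \<and> \<not> E v x}"
    using L_1 by auto
  then have "card {v \<in> L 1. \<not> E v z1} \<le>
      card {v \<in> L 1. \<not> E v z1 \<and> E v x} + card {v \<in> L 1. \<not> E v z1 \<and> E v y \<and> \<not> E v x}"
    by (simp add: card_Un_le)
  then show ?thesis
    using card_x_neighbours_in_L1 card_y_only_neighbours_in_L1 by linarith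
qed

lemma card_L2_le_4: "card (L 2) \<le> 4"
proof -
  define N where "N = {v \<in> L 1. \<not> E v z1}"
  define L2_neighbour where "L2_neighbour v = (THE w. w \<in> L 2 \<and> E v w)" for v
  have "L 2 - {z1} \<subseteq> L2_neighbour ` N"
  proof
    fix w assume w: "w \<in> L 2 - {z1}"
    then obtain v where v: "v \<in> L 1" "E w v"
      using L_Suc_neighbour[of w 1] by (auto simp: numeral_2_eq_2)
    then have "v \<in> N"
      using L2_neighbour_eq_z1[of v w] w E_sym unfolding N_def by blast
    moreover have "L2_neighbour v = w"
      unfolding L2_neighbour_def using L2_neighbour_unique[of v] v w \<open>v \<in> N\<close> E_sym unfolding N_def
      by (intro the_equality) auto
    ultimately show "w \<in> L2_neighbour ` N" by blast
  qed
  moreover have "finite N"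
    using finite_L[of 1] unfolding N_def by simp
  ultimately have "card (L 2 - {z1}) \<le> card (L2_neighbour ` N)"
    by (intro card_mono) auto
  also have "\<dots> \<le> card N"
    using \<open>finite N\<close> by (rule card_image_le)
  finally have "card (L 2 - {z1}) \<le> card N" .
  then show ?thesis
    using card_L1_nonadjacent_z1 finite_L[of 2] path_L(1) unfolding N_def
    by (simp add: card_Diff_singleton)
qed

end

lemma card_L2_le_4_if_L6_nonempty:
  assumes "L 6 \<noteq> {}"
  shows "card (L 2) \<le> 4"
proof -
  obtain z5 where z5: "z5 \<in> L 6"
    using assms by blast
  obtain z4 where z4: "z4 \<in> L 5" "E z5 z4"
    using L_Suc_neighbour[of z5 5] z5 by auto
  obtain z3 where z3: "z3 \<in> L 4" "E z4 z3"
    using L_Suc_neighbour[of z4 4] z4 by auto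
  obtain z2 where z2: "z2 \<in> L 3" "E z3 z2"
    using L_Suc_neighbour[of z3 3] z3 by auto
  obtain z1 where z1: "z1 \<in> L 2" "E z2 z1"
    using L_Suc_neighbour[of z2 2] z2 by auto
  obtain u where u: "u \<in> L 1" "E z1 u"
    using L_Suc_neighbour[of z1 1] z1 by (auto simp: numeral_2_eq_2)
  note path = z1 z2 z3 z4 z5 u
  show ?thesis
  proof (cases "E u x")
    case True
    then show ?thesis
      by (intro card_L2_le_4[of z1 z2 z3 z4 z5 u]) (use path E_sym in auto)
  next
    case False
    then have "E u y"
      using u L_1 by blast
    have swap: "{y, x} = {x, y}"
      by blast
    interpret swapped: edge_layering V E y x
      by unfold_locales (use E_xy E_sym L2_independent L3_one_L2_neighbour in \<open>simp_all add: swap\<close>)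
    show ?thesis
      using swapped.card_L2_le_4[of z1 z2 z3 z4 z5 u] path \<open>E u y\<close> E_sym by (simp add: swap)
  qed
qed

end

theorem lemma23:
  fixes V :: "'a set" and E :: "'a \<Rightarrow> 'a \<Rightarrow> bool" and x y r :: 'a
  assumes "simple_graph V E"
    and "\<not> has_induced V E 8 S115"
    and "\<not> has_induced V E 4 K4"
    and "\<not> has_induced V E 4 diamond"
    and "\<not> has_induced V E 5 butterfly"
    and "E x y" and "r \<in> V" and "E r x" and "\<not> E r y"
    and "\<forall>u\<in>layer V E {x, y} 2. \<forall>v\<in>layer V E {x, y} 2. \<not> E u v"
    and "\<forall>v\<in>layer V E {x, y} 3. card {w \<in> layer V E {x, y} 2. E v w} = 1"
    and "card (layer V E {x, y} 2) \<ge> 5"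
  shows "layer V E {x, y} 6 = {}"
proof -
  interpret edge_layering V E x y
    by unfold_locales (use assms in blast)+
  show ?thesis
    using card_L2_le_4_if_L6_nonempty assms(12) by fastforce
qed

end
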